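(* Let $\succ=(\succ_s)_{s\in S}$ be a priority profile in which every $\succ_s$ is a weak order on $I$. Then $$f^{\succ}\subseteq\bigcup_{\succ'\in\mathcal{E}^c(\succ)}f^{\succ'},$$ i.e., every student optimal stable matching for $\succ$ is the (unique) student optimal stable matching for some extension profile obtained via a single tiebreaking rule.
   Context: A weak order on $I$ is an asymmetric, transitive and negatively transitive ($(x,y)\notin B$ and $(y,z)\notin B$ imply $(x,z)\notin B$) relation; a total order is a complete weak order. School choice setup: $I$ is a finite set of students with $|I|\ge 3$, $S$ a finite set of schools. Each student $i$ has a total order $P_i$ on $S\cup\{\emptyset\}$; $sR_is'$ means $sP_is'$ or $s=s'$. Each school $s$ has capacity $q_s\in\mathbb{Z}_{++}$ and an asymmetric priority relation $\succ_s$ on $I$. A matching $\mu$ assigns each $i$ to $\mu(i)\in S\cup\{\emptyset\}$, $\mu(s)=\{i:\mu(i)=s\}$, $|\mu(s)|\le q_s$. $\mu$ is stable for $\succ$ if individually rational ($\mu(i)R_i\emptyset$), non-wasteful ($sP_i\mu(i)$ implies $|\mu(s)|=q_s$) and fair (no $s$, $j\in\mu(s)$, $i\notin\mu(s)$ with $sR_i\mu(i)$ and $(i,j)\in\succ_s$). Pareto dominance: $\mu'(i)R_i\mu(i)$ for all $i$, strict for some $i$. An SOSM for $\succ$ is a stable matching not Pareto dominated by any stable matching; $f^\succ$ is the set of SOSMs. Maximal set: $M(I',\succ_s)=\{i\in I':(j,i)\notin\succ_s\ \forall j\in I'\setminus\{i\}\}$. For bijections $r_s:I\to\{1,\dots,|I|\}$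 and $\tau=(r_s)_{s\in S}$, the $\tau$ tiebreaking SMO algorithm constructs, for each $s$, a total order $\succ'_s: i_1\,i_2\cdots i_{|I|}$ (meaning $(i_t,i_{t'})\in\succ'_s$ iff $t<t'$) where at step $t=1,\dots,|I|$, $i_t$ is the element of $M(I\setminus\{i_1,\dots,i_{t-1}\},\succ_s)$ with smallest $r_s$-value. $\tau$ is a single tiebreaking rule if $r_s=r_{s'}$ for all $s,s'\in S$. $\mathcal{E}^c(\succ)$ is the set of profiles $(\succ'_s)_{s\in S}$ obtained by the $\tau$ tiebreaking SMO algorithm for some single tiebreaking rule $\tau$. *)

theory Defs
  imports Main
begin

(* Students have type 'i, schools type 's; the null assignment \<emptyset> is None. *)

definition weak_order :: "'i set \<Rightarrow> 'i rel \<Rightarrow> bool" where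
  "weak_order I B \<longleftrightarrow> B \<subseteq> I \<times> I \<and>
     (\<forall>x\<in>I. \<forall>y\<in>I. (x,y) \<in> B \<longrightarrow> (y,x) \<notin> B) \<and>
     (\<forall>x\<in>I. \<forall>y\<in>I. \<forall>z\<in>I. (x,y) \<in> B \<longrightarrow> (y,z) \<in> B \<longrightarrow> (x,z) \<in> B) \<and>
     (\<forall>x\<in>I. \<forall>y\<in>I. \<forall>z\<in>I. (x,y) \<notin> B \<longrightarrow> (y,z) \<notin> B \<longrightarrow> (x,z) \<notin> B)"

definition total_order :: "'a set \<Rightarrow> 'a rel \<Rightarrow> bool" where
  "total_order A B \<longleftrightarrow> weak_order A B \<and>
     (\<forall>x\<in>A. \<forall>y\<in>A. x \<noteq> y \<longrightarrow> (x,y) \<in> B \<or> (y,x) \<in> B)"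

definition outcomes :: "'s set \<Rightarrow> 's option set" where
  "outcomes S = insert None (Some ` S)"

definition weak_pref :: "'s option rel \<Rightarrow> 's option \<Rightarrow> 's option \<Rightarrow> bool" where
  "weak_pref P a b \<longleftrightarrow> (a,b) \<in> P \<or> a = b"

definition assigned :: "'i set \<Rightarrow> ('i \<Rightarrow> 's option) \<Rightarrow> 's \<Rightarrow> 'i set" where
  "assigned I \<mu> s = {i \<in> I. \<mu> i = Some s}"

definition matching :: "'i set \<Rightarrow> 's set \<Rightarrow> ('s \<Rightarrow> nat) \<Rightarrow> ('i \<Rightarrow> 's option) \<Rightarrow> bool" where
  "matching I S q \<mu> \<longleftrightarrow> (\<forall>i\<in>I. \<mu> i \<in> outcomes S) \<and> (\<forall>i. i \<notin> I \<longrightarrow> \<mu> i = None) \<and>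
     (\<forall>s\<in>S. card (assigned I \<mu> s) \<le> q s)"

definition stable :: "'i set \<Rightarrow> 's set \<Rightarrow> ('i \<Rightarrow> 's option rel) \<Rightarrow> ('s \<Rightarrow> nat)
    \<Rightarrow> ('s \<Rightarrow> 'i rel) \<Rightarrow> ('i \<Rightarrow> 's option) \<Rightarrow> bool" where
  "stable I S P q pr \<mu> \<longleftrightarrow> matching I S q \<mu> \<and>
     (\<forall>i\<in>I. weak_pref (P i) (\<mu> i) None) \<and>
     (\<forall>i\<in>I. \<forall>s\<in>S. (Some s, \<mu> i) \<in> P i \<longrightarrow> card (assigned I \<mu> s) = q s) \<and>
     \<not> (\<exists>s\<in>S. \<exists>j\<in>assigned I \<mu> s. \<exists>i\<in>I. i \<notin> assigned I \<mu> s \<and>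
           weak_pref (P i) (Some s) (\<mu> i) \<and> (i, j) \<in> pr s)"

definition pareto_dominates :: "'i set \<Rightarrow> ('i \<Rightarrow> 's option rel) \<Rightarrow> ('i \<Rightarrow> 's option)
    \<Rightarrow> ('i \<Rightarrow> 's option) \<Rightarrow> bool" where
  "pareto_dominates I P \<mu>' \<mu> \<longleftrightarrow> (\<forall>i\<in>I. weak_pref (P i) (\<mu>' i) (\<mu> i)) \<and>
     (\<exists>i\<in>I. (\<mu>' i, \<mu> i) \<in> P i)"

definition SOSM :: "'i set \<Rightarrow> 's set \<Rightarrow> ('i \<Rightarrow> 's option rel) \<Rightarrow> ('s \<Rightarrow> nat)
    \<Rightarrow> ('s \<Rightarrow> 'i rel) \<Rightarrow> ('i \<Rightarrow> 's option) set" where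
  "SOSM I S P q pr = {\<mu>. stable I S P q pr \<mu> \<and>
     \<not> (\<exists>\<mu>'. stable I S P q pr \<mu>' \<and> pareto_dominates I P \<mu>' \<mu>)}"

definition maximal_set :: "'i set \<Rightarrow> 'i rel \<Rightarrow> 'i set" where
  "maximal_set I' B = {i \<in> I'. \<forall>j \<in> I' - {i}. (j, i) \<notin> B}"

fun smo_seq :: "'i set \<Rightarrow> ('i \<Rightarrow> nat) \<Rightarrow> 'i rel \<Rightarrow> nat \<Rightarrow> 'i list" where
  "smo_seq I r B 0 = []"
| "smo_seq I r B (Suc t) = smo_seq I r B t @
     [ARG_MIN r i. i \<in> maximal_set (I - set (smo_seq I r B t)) B]"

definition smo_order :: "'i set \<Rightarrow> ('i \<Rightarrow> nat) \<Rightarrow> 'i rel \<Rightarrow> 'i rel" where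
  "smo_order I r B = (let xs = smo_seq I r B (card I) in
     {(xs ! a, xs ! b) | a b. a < b \<and> b < card I})"

definition single_tb_extensions :: "'i set \<Rightarrow> 's set \<Rightarrow> ('s \<Rightarrow> 'i rel) \<Rightarrow> ('s \<Rightarrow> 'i rel) set" where
  "single_tb_extensions I S pr = {pr'. \<exists>r. bij_betw r I {1..card I} \<and>
     (\<forall>s\<in>S. pr' s = smo_order I r (pr s))}"

end

theory Submission
  imports Defs "HOL-Combinatorics.Cycles"
begin

text \<open>Let \<open>\<mu>\<close> be student optimal stable. Draw an edge \<open>j \<rightarrow> i\<close> when \<open>i\<close> prefers the school
  \<open>s\<close> of \<open>j\<close> and \<open>j\<close> has no strict priority over \<open>i\<close> at \<open>s\<close>. Rotating seats along a cycle
  of this graph keeps the matching stable: a student objecting to a newcomer at \<open>s\<close> would,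
  by negative transitivity, also have priority over the student who left \<open>s\<close>. The rotation
  Pareto improves \<open>\<mu>\<close>, so the graph is acyclic. A single tiebreaking rule that ranks students
  along a topological order of the graph breaks every tie at \<open>s\<close> in favour of the tail of an
  edge, hence \<open>\<mu>\<close> stays stable for the resulting profile; as the profile refines \<open>\<succ>\<close>,
  every matching stable for it is stable for \<open>\<succ>\<close>, so \<open>\<mu>\<close> is still undominated.\<close>

lemma weak_order_field: "weak_order A B \<Longrightarrow> (x, y) \<in> B \<Longrightarrow> x \<in> A \<and> y \<in> A"
  unfolding weak_order_def by blast

lemma weak_order_irrefl: "weak_order A B \<Longrightarrow> (x, x) \<notin> B"
  unfolding weak_order_def by blast

lemma weak_order_trans: "weak_order A B \<Longrightarrow> trans B"
  unfolding weak_order_def trans_def by blast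

lemma weak_order_neg_trans:
  "weak_order A B \<Longrightarrow> (x, z) \<in> B \<Longrightarrow> y \<in> A \<Longrightarrow> (x, y) \<in> B \<or> (y, z) \<in> B"
  unfolding weak_order_def by blast

lemma weak_order_wf:
  assumes "weak_order A B" and "finite A"
  shows "wf B"
proof (rule finite_acyclic_wf)
  show "finite B"
    using assms finite_subset[of B "A \<times> A"] unfolding weak_order_def by blast
  show "acyclic B"
    using assms(1) by (simp add: acyclic_def weak_order_irrefl weak_order_trans)
qed

lemma maximal_set_nonempty:
  assumes "weak_order A B" and "finite A" and "R \<subseteq> A" and "R \<noteq> {}"
  shows "maximal_set R B \<noteq> {}"
proof -
  obtain z where "z \<in> R" and "\<And>y. (y, z) \<in> B \<Longrightarrow> y \<notin> R"
    using wfE_min[OF weak_order_wf[OF assms(1,2)]] assms(4) by blast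
  then show ?thesis
    unfolding maximal_set_def by blast
qed

lemma length_smo_seq [simp]: "length (smo_seq I r B t) = t"
  by (induction t) auto

lemma take_smo_seq: "a \<le> n \<Longrightarrow> take a (smo_seq I r B n) = smo_seq I r B a"
proof (induction n)
  case (Suc n)
  then show ?case
    by (cases "a = Suc n") auto
qed simp

lemma nth_smo_seq:
  "a < n \<Longrightarrow> smo_seq I r B n ! a = (ARG_MIN r i. i \<in> maximal_set (I - set (smo_seq I r B a)) B)"
  by (metis take_smo_seq Suc_leI lessI nth_take length_smo_seq nth_append_length smo_seq.simps(2))

context
  fixes I :: "'i set" and r :: "'i \<Rightarrow> nat" and B :: "'i rel"
  assumes wo: "weak_order I B" and fin: "finite I"
begin

lemma arg_min_maximal_set:
  assumes "R \<subseteq> I" and "R \<noteq> {}"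
  defines "x \<equiv> ARG_MIN r i. i \<in> maximal_set R B"
  shows "x \<in> maximal_set R B" and "\<And>y. y \<in> maximal_set R B \<Longrightarrow> r x \<le> r y"
  using maximal_set_nonempty[OF wo fin assms(1,2)] arg_min_nat_lemma[of "\<lambda>i. i \<in> maximal_set R B" _ r]
  unfolding x_def by blast+

lemma smo_seq_distinct_subset:
  "t \<le> card I \<Longrightarrow> distinct (smo_seq I r B t) \<and> set (smo_seq I r B t) \<subseteq> I"
proof (induction t)
  case (Suc t)
  let ?R = "I - set (smo_seq I r B t)"
  have "card (set (smo_seq I r B t)) < card I"
    using Suc by (simp add: distinct_card)
  then have "?R \<noteq> {}"
    by (metis Diff_eq_empty_iff card_mono finite_set not_le)
  then have "(ARG_MIN r i. i \<in> maximal_set ?R B) \<in> ?R"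
    using arg_min_maximal_set(1)[of ?R] unfolding maximal_set_def by blast
  then show ?case
    using Suc by simp
qed simp

abbreviation smo_list :: "'i list" where
  "smo_list \<equiv> smo_seq I r B (card I)"

lemma
  shows distinct_smo_list: "distinct smo_list"
    and set_smo_list: "set smo_list = I"
  using smo_seq_distinct_subset[of "card I"] card_subset_eq[OF fin] distinct_card
  by (metis length_smo_seq order_refl)+

lemma smo_list_nth_mem: "a < card I \<Longrightarrow> smo_list ! a \<in> I"
  using set_smo_list nth_mem by (metis length_smo_seq)

lemma smo_list_nth_choice:
  assumes "a < card I"
  shows "smo_list ! a \<in> maximal_set (I - set (take a smo_list)) B"
    and "\<And>y. y \<in> maximal_set (I - set (take a smo_list)) B \<Longrightarrow> r (smo_list ! a) \<le> r y"
proof -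
  have "smo_list ! a \<in> I"
    using assms by (rule smo_list_nth_mem)
  moreover have "smo_list ! a \<notin> set (take a smo_list)"
    using assms distinct_smo_list by (auto simp: in_set_conv_nth nth_eq_iff_index_eq)
  ultimately have "smo_list ! a \<in> I - set (take a smo_list)"
    by blast
  then have "I - set (take a smo_list) \<noteq> {}"
    by blast
  moreover have "smo_list ! a = (ARG_MIN r i. i \<in> maximal_set (I - set (take a smo_list)) B)"
    using assms by (simp add: nth_smo_seq take_smo_seq)
  ultimately show "smo_list ! a \<in> maximal_set (I - set (take a smo_list)) B"
    and "\<And>y. y \<in> maximal_set (I - set (take a smo_list)) B \<Longrightarrow> r (smo_list ! a) \<le> r y"
    using arg_min_maximal_set[of "I - set (take a smo_list)"] by auto
qed

lemma smo_list_nth_remaining: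
  "a \<le> b \<Longrightarrow> b < card I \<Longrightarrow> smo_list ! b \<in> I - set (take a smo_list)"
  using distinct_smo_list smo_list_nth_mem
  by (auto simp: in_set_conv_nth nth_eq_iff_index_eq)

lemma smo_order_eq:
  "smo_order I r B = {(smo_list ! a, smo_list ! b) | a b. a < b \<and> b < card I}"
  unfolding smo_order_def Let_def ..

lemma smo_order_not_reversed:
  assumes "(i, j) \<in> smo_order I r B"
  shows "(j, i) \<notin> B"
proof -
  obtain a b where ab: "a < b" "b < card I" and ij: "i = smo_list ! a" "j = smo_list ! b"
    using assms unfolding smo_order_eq by blast
  have "i \<noteq> j"
    using ab ij distinct_smo_list by (simp add: nth_eq_iff_index_eq)
  then show ?thesis
    using smo_list_nth_choice(1)[of a] smo_list_nth_remaining[of a b] ab ij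
    unfolding maximal_set_def by auto
qed

lemma smo_order_extends: "B \<subseteq> smo_order I r B"
proof
  fix p assume p: "p \<in> B"
  then obtain i j where ij: "p = (i, j)" "i \<in> I" "j \<in> I"
    using weak_order_field[OF wo] by (metis surj_pair)
  then obtain a b where a: "a < card I" "i = smo_list ! a" and b: "b < card I" "j = smo_list ! b"
    using set_smo_list by (metis in_set_conv_nth length_smo_seq)
  have "a \<noteq> b"
    using weak_order_irrefl[OF wo] p ij a b by blast
  moreover have "\<not> b < a"
    using smo_order_not_reversed[of j i] p ij a b unfolding smo_order_eq by blast
  ultimately show "p \<in> smo_order I r B"
    unfolding smo_order_eq using a b ij by force
qed

text \<open>If \<open>i\<close> is chosen before \<open>j\<close> without having priority over it, then by negative
  transitivity \<open>j\<close> was already maximal when \<open>i\<close> was chosen, so the ranking decided.\<close>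
lemma smo_order_tiebreak:
  assumes inj: "inj_on r I" and ij: "(i, j) \<in> smo_order I r B" and "(i, j) \<notin> B"
  shows "r i < r j"
proof -
  obtain a b where ab: "a < b" "b < card I" and ij: "i = smo_list ! a" "j = smo_list ! b"
    using ij unfolding smo_order_eq by blast
  let ?R = "I - set (take a smo_list)"
  have i_max: "i \<in> maximal_set ?R B"
    using smo_list_nth_choice(1)[of a] ab ij by simp
  have j_rem: "j \<in> ?R"
    using smo_list_nth_remaining[of a b] ab ij by simp
  have "j \<in> maximal_set ?R B"
    unfolding maximal_set_def
  proof (intro CollectI conjI ballI j_rem notI)
    fix k assume k: "k \<in> ?R - {j}" and kj: "(k, j) \<in> B"
    then have "(k, i) \<in> B"
      using weak_order_neg_trans[OF wo kj, of i] i_max \<open>(i, j) \<notin> B\<close> unfolding maximal_set_def by blast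
    then show False
      using i_max k kj \<open>(i, j) \<notin> B\<close> unfolding maximal_set_def by blast
  qed
  then have "r i \<le> r j"
    using smo_list_nth_choice(2)[of a] ab ij by simp
  moreover have "i \<noteq> j"
    using ab ij distinct_smo_list by (simp add: nth_eq_iff_index_eq)
  then have "r i \<noteq> r j"
    using inj i_max j_rem unfolding inj_on_def maximal_set_def by blast
  ultimately show ?thesis
    by simp
qed

end

lemma acyclic_ranking:
  assumes "finite E" and "acyclic E" and "finite A"
  shows "\<exists>r. bij_betw r A {1..card A} \<and> (\<forall>j\<in>A. \<forall>i\<in>A. (j, i) \<in> E \<longrightarrow> r j < r i)"
  using assms(3)
proof (induction "card A" arbitrary: A)
  case 0
  then show ?case
    by (simp add: bij_betw_def)
next
  case (Suc n)
  obtain x where "x \<in> A"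
    using Suc.hyps(2) by fastforce
  then obtain z where z: "z \<in> A" and z_max: "\<And>y. (y, z) \<in> E\<inverse> \<Longrightarrow> y \<notin> A"
    by (rule wfE_min[OF finite_acyclic_wf_converse[OF assms(1,2)]]) (rule that)
  obtain r where r: "bij_betw r (A - {z}) {1..n}"
    and r_mono: "\<forall>j\<in>A - {z}. \<forall>i\<in>A - {z}. (j, i) \<in> E \<longrightarrow> r j < r i"
    using Suc.hyps(1)[of "A - {z}"] Suc.hyps(2) Suc.prems z by (metis card_Diff_singleton diff_Suc_1 finite_Diff)
  define r' where "r' = r(z := Suc n)"
  have "bij_betw r' (A - {z}) {1..n}"
    using r unfolding r'_def by (rule bij_betw_cong[THEN iffD1, rotated]) auto
  then have "bij_betw r' ((A - {z}) \<union> {z}) ({1..n} \<union> {r' z})"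
    by (rule notIn_Un_bij_betw[rotated 2]) (auto simp: r'_def)
  moreover have "(A - {z}) \<union> {z} = A" and "{1..n} \<union> {r' z} = {1..card A}"
    using z Suc.hyps(2) by (auto simp: r'_def)
  moreover have "r' j < r' i" if "j \<in> A" "i \<in> A" "(j, i) \<in> E" for i j
  proof -
    have "j \<noteq> z"
      using z_max that by auto
    moreover have "r j \<in> {1..n}"
      using r \<open>j \<noteq> z\<close> that(1) by (auto simp: bij_betw_def)
    ultimately show ?thesis
      using r_mono that unfolding r'_def by (cases "i = z") auto
  qed
  ultimately show ?case
    by auto
qed

lemma not_acyclic_simple_cycle:
  assumes "\<not> acyclic E"
  obtains cs where "distinct cs" and "cs \<noteq> []" and "\<And>x. x \<in> set cs \<Longrightarrow> (x, cycle_of_list cs x) \<in> E"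
proof -
  have "\<exists>n. n > 0 \<and> (\<exists>x. (x, x) \<in> E ^^ n)"
    using assms unfolding acyclic_def by (auto simp: trancl_power)
  define n where "n = (LEAST n. n > 0 \<and> (\<exists>x. (x, x) \<in> E ^^ n))"
  have n: "n > 0 \<and> (\<exists>x. (x, x) \<in> E ^^ n)"
    unfolding n_def by (rule LeastI_ex) fact
  have n_min: "n \<le> m" if "m > 0" and "(x, x) \<in> E ^^ m" for m x
    unfolding n_def by (rule Least_le) (use that in blast)
  obtain x where "(x, x) \<in> E ^^ n"
    using n by blast
  then obtain f where f: "f 0 = x" "f n = x" and f_edge: "\<forall>i<n. (f i, f (Suc i)) \<in> E"
    unfolding relpow_fun_conv by blast
  have f_inj: "f a \<noteq> f b" if "a < b" "b < n" for a b
  proof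
    assume "f a = f b"
    then have "(f a, f a) \<in> E ^^ (b - a)"
      unfolding relpow_fun_conv using that f_edge
      by (intro exI[of _ "\<lambda>t. f (a + t)"]) auto
    then show False
      using n_min[of "b - a" "f a"] that by auto
  qed
  define cs where "cs = map f [0..<n]"
  have "inj_on f {0..<n}"
  proof (rule inj_onI)
    fix a b assume "a \<in> {0..<n}" "b \<in> {0..<n}" "f a = f b"
    then show "a = b"
      using f_inj[of a b] f_inj[of b a] by (cases a b rule: linorder_cases) auto
  qed
  then have "distinct cs"
    unfolding cs_def by (simp add: distinct_map)
  moreover have "cs \<noteq> []"
    using n unfolding cs_def by simp
  moreover have "(y, cycle_of_list cs y) \<in> E" if "y \<in> set cs" for y
  proof -
    from \<open>y \<in> set cs\<close> obtain i where i: "i < n" "y = f i"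
      unfolding cs_def by auto
    have "map (cycle_of_list cs) cs = rotate1 cs"
      using cyclic_rotation[OF \<open>distinct cs\<close>, of 1] by simp
    then have "cycle_of_list cs y = rotate1 cs ! i"
      using i by (metis cs_def diff_zero length_map length_upt nth_map nth_upt add_0)
    also have "\<dots> = f (Suc i)"
      using i f by (cases "Suc i = n") (auto simp: cs_def nth_rotate1)
    finally show ?thesis
      using f_edge i by simp
  qed
  ultimately show thesis
    using that by blast
qed

definition improvement_graph :: "'i set \<Rightarrow> 's set \<Rightarrow> ('i \<Rightarrow> 's option rel) \<Rightarrow> ('s \<Rightarrow> 'i rel)
    \<Rightarrow> ('i \<Rightarrow> 's option) \<Rightarrow> 'i rel" where
  "improvement_graph I S P pr \<mu> = {(j, i). j \<in> I \<and> i \<in> I \<and>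
     (\<exists>s\<in>S. \<mu> j = Some s \<and> (Some s, \<mu> i) \<in> P i \<and> (j, i) \<notin> pr s)}"

lemma improvement_graph_subset: "improvement_graph I S P pr \<mu> \<subseteq> I \<times> I"
  unfolding improvement_graph_def by auto

lemma weak_pref_trans: "trans P \<Longrightarrow> weak_pref P a b \<Longrightarrow> weak_pref P b c \<Longrightarrow> weak_pref P a c"
  unfolding weak_pref_def trans_def by blast

lemma stable_antimono:
  assumes "\<forall>s\<in>S. pr s \<subseteq> pr' s" and "stable I S P q pr' \<mu>"
  shows "stable I S P q pr \<mu>"
  using assms unfolding stable_def by blast

context
  fixes I :: "'i set" and S :: "'s set" and P :: "'i \<Rightarrow> 's option rel" and q :: "'s \<Rightarrow> nat"
    and pr :: "'s \<Rightarrow> 'i rel" and \<mu> :: "'i \<Rightarrow> 's option" and \<sigma> :: "'i \<Rightarrow> 'i"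
  assumes pref: "\<forall>i\<in>I. weak_order (outcomes S) (P i)"
    and prio: "\<forall>s\<in>S. weak_order I (pr s)"
    and stable: "stable I S P q pr \<mu>"
    and bij: "bij \<sigma>"
    and moves: "\<And>k. \<sigma> k \<noteq> k \<Longrightarrow> (k, \<sigma> k) \<in> improvement_graph I S P pr \<mu>"
begin

lemma rotation_shift: "(\<mu> \<circ> inv \<sigma>) (\<sigma> k) = \<mu> k"
  using bij by (simp add: bij_is_inj)

lemma rotation_mem_iff: "\<sigma> k \<in> I \<longleftrightarrow> k \<in> I"
  using moves[of k] unfolding improvement_graph_def by (cases "\<sigma> k = k") auto

lemma rotation_moved:
  obtains "(\<mu> \<circ> inv \<sigma>) i = \<mu> i"
  | k s where "i = \<sigma> k" "k \<in> I" "i \<in> I" "(\<mu> \<circ> inv \<sigma>) i = Some s" "\<mu> k = Some s" "s \<in> S"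
      "(Some s, \<mu> i) \<in> P i" "(k, i) \<notin> pr s"
proof -
  obtain k where i: "i = \<sigma> k"
    using bij by (metis bij_pointE)
  show thesis
  proof (cases "\<sigma> k = k")
    case True
    then show thesis
      using that(1) rotation_shift[of k] i by simp
  next
    case False
    then show thesis
      using that(2)[OF i] moves[OF False] rotation_shift[of k] i
      unfolding improvement_graph_def by auto
  qed
qed

lemma rotation_weakly_better: "i \<in> I \<Longrightarrow> weak_pref (P i) ((\<mu> \<circ> inv \<sigma>) i) (\<mu> i)"
  by (cases i rule: rotation_moved) (auto simp: weak_pref_def)

lemma rotation_better_trans:
  assumes "i \<in> I" and "(a, (\<mu> \<circ> inv \<sigma>) i) \<in> P i"
  shows "(a, \<mu> i) \<in> P i"
  using assms rotation_weakly_better[OF assms(1)] weak_order_trans[of _ "P i"] pref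
  unfolding weak_pref_def trans_def by metis

lemma rotation_assigned: "assigned I (\<mu> \<circ> inv \<sigma>) s = \<sigma> ` assigned I \<mu> s"
proof -
  have "assigned I (\<mu> \<circ> inv \<sigma>) s = \<sigma> ` {k. \<sigma> k \<in> I \<and> (\<mu> \<circ> inv \<sigma>) (\<sigma> k) = Some s}"
    unfolding assigned_def using bij by (auto simp: bij_def image_iff) (metis surj_f_inv_f)
  then show ?thesis
    unfolding assigned_def rotation_shift rotation_mem_iff by simp
qed

lemma rotation_card_assigned: "card (assigned I (\<mu> \<circ> inv \<sigma>) s) = card (assigned I \<mu> s)"
  unfolding rotation_assigned by (rule card_image[OF inj_on_subset[OF bij_is_inj[OF bij] subset_UNIV]])

lemma rotation_matching: "matching I S q (\<mu> \<circ> inv \<sigma>)"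
proof -
  have "(\<mu> \<circ> inv \<sigma>) i \<in> outcomes S" if "i \<in> I" for i
    using stable that weak_order_field[of "outcomes S" "P i"] pref
    by (cases i rule: rotation_moved) (auto simp: stable_def matching_def)
  moreover have "(\<mu> \<circ> inv \<sigma>) i = None" if "i \<notin> I" for i
    using stable that by (cases i rule: rotation_moved) (auto simp: stable_def matching_def)
  ultimately show ?thesis
    using stable rotation_card_assigned unfolding stable_def matching_def by simp
qed

text \<open>A student \<open>i\<close> with priority over the newcomer \<open>j = \<sigma> k\<close> at \<open>s\<close> also has priority
  over \<open>k\<close>, whose seat \<open>j\<close> took, because \<open>k\<close> had no priority over \<open>j\<close>; so \<open>i\<close> already
  had justified envy at \<open>\<mu>\<close>.\<close>
lemma rotation_fair:
  assumes s: "s \<in> S" and j: "j \<in> assigned I (\<mu> \<circ> inv \<sigma>) s" and i: "i \<in> I"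
    and "i \<notin> assigned I (\<mu> \<circ> inv \<sigma>) s" and "weak_pref (P i) (Some s) ((\<mu> \<circ> inv \<sigma>) i)"
    and ij: "(i, j) \<in> pr s"
  shows False
proof -
  have "(Some s, (\<mu> \<circ> inv \<sigma>) i) \<in> P i"
    using assms(4,5) i unfolding assigned_def weak_pref_def by auto
  then have envy: "(Some s, \<mu> i) \<in> P i"
    using rotation_better_trans i by blast
  then have i_out: "i \<notin> assigned I \<mu> s"
    using pref i weak_order_irrefl unfolding assigned_def by fastforce
  have no_envy: "(i, l) \<notin> pr s" if "l \<in> assigned I \<mu> s" for l
    using stable s i i_out envy that unfolding stable_def weak_pref_def by blast
  show False
  proof (cases "\<mu> j = Some s")
    case True
    then show False
      using no_envy[of j] ij j unfolding assigned_def by auto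
  next
    case False
    then obtain k where k: "j = \<sigma> k" "k \<in> I" "\<mu> k = Some s" "(k, j) \<notin> pr s"
      using j by (cases j rule: rotation_moved) (auto simp: assigned_def)
    then have "(i, k) \<in> pr s"
      using weak_order_neg_trans[OF prio[rule_format, OF s] ij, of k] by blast
    then show False
      using no_envy[of k] k unfolding assigned_def by blast
  qed
qed

lemma rotation_stable: "stable I S P q pr (\<mu> \<circ> inv \<sigma>)"
  unfolding stable_def
proof (intro conjI rotation_matching ballI impI notI)
  fix i assume i: "i \<in> I"
  have "weak_pref (P i) (\<mu> i) None"
    using stable i unfolding stable_def by blast
  then show "weak_pref (P i) ((\<mu> \<circ> inv \<sigma>) i) None"
    using weak_pref_trans[OF weak_order_trans] pref i rotation_weakly_better[OF i] by blast
next
  fix i s assume "i \<in> I" "s \<in> S" "(Some s, (\<mu> \<circ> inv \<sigma>) i) \<in> P i"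
  then show "card (assigned I (\<mu> \<circ> inv \<sigma>) s) = q s"
    using stable rotation_better_trans rotation_card_assigned unfolding stable_def by metis
next
  assume "\<exists>s\<in>S. \<exists>j\<in>assigned I (\<mu> \<circ> inv \<sigma>) s. \<exists>i\<in>I. i \<notin> assigned I (\<mu> \<circ> inv \<sigma>) s \<and>
    weak_pref (P i) (Some s) ((\<mu> \<circ> inv \<sigma>) i) \<and> (i, j) \<in> pr s"
  then show False
    using rotation_fair by blast
qed

end

lemma SOSM_improvement_graph_acyclic:
  assumes pref: "\<forall>i\<in>I. weak_order (outcomes S) (P i)"
    and prio: "\<forall>s\<in>S. weak_order I (pr s)"
    and "\<mu> \<in> SOSM I S P q pr"
  shows "acyclic (improvement_graph I S P pr \<mu>)"
proof (rule ccontr)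
  assume "\<not> acyclic (improvement_graph I S P pr \<mu>)"
  then obtain cs where "distinct cs" "cs \<noteq> []"
    and cycle: "\<And>x. x \<in> set cs \<Longrightarrow> (x, cycle_of_list cs x) \<in> improvement_graph I S P pr \<mu>"
    by (rule not_acyclic_simple_cycle) (rule that)
  let ?\<sigma> = "cycle_of_list cs"
  have stable: "stable I S P q pr \<mu>"
    using assms(3) unfolding SOSM_def by blast
  have bij: "bij ?\<sigma>"
    using cycle_permutes permutes_bij by blast
  have moves: "(k, ?\<sigma> k) \<in> improvement_graph I S P pr \<mu>" if "?\<sigma> k \<noteq> k" for k
    using cycle id_outside_supp that by metis
  note rotation = rotation_stable[OF pref prio stable bij moves]
    rotation_weakly_better[OF pref prio stable bij moves]
    rotation_shift[OF pref prio stable bij moves]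
  obtain s where "?\<sigma> (hd cs) \<in> I" "\<mu> (hd cs) = Some s" "(Some s, \<mu> (?\<sigma> (hd cs))) \<in> P (?\<sigma> (hd cs))"
    using cycle[of "hd cs"] \<open>cs \<noteq> []\<close> unfolding improvement_graph_def by auto
  then have "pareto_dominates I P (\<mu> \<circ> inv ?\<sigma>) \<mu>"
    unfolding pareto_dominates_def using rotation(2,3) by metis
  then show False
    using assms(3) rotation(1) unfolding SOSM_def by blast
qed

lemma stable_smo_order:
  assumes prio: "\<forall>s\<in>S. weak_order I (pr s)" and "finite I"
    and stable: "stable I S P q pr \<mu>" and "inj_on r I"
    and ranked: "\<And>j i. (j, i) \<in> improvement_graph I S P pr \<mu> \<Longrightarrow> r j < r i"
  shows "stable I S P q (\<lambda>s. smo_order I r (pr s)) \<mu>"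
  unfolding stable_def
proof (intro conjI notI)
  assume "\<exists>s\<in>S. \<exists>j\<in>assigned I \<mu> s. \<exists>i\<in>I. i \<notin> assigned I \<mu> s \<and>
    weak_pref (P i) (Some s) (\<mu> i) \<and> (i, j) \<in> smo_order I r (pr s)"
  then obtain s j i where s: "s \<in> S" and j: "j \<in> assigned I \<mu> s" and i: "i \<in> I"
    and i_out: "i \<notin> assigned I \<mu> s" and envy: "weak_pref (P i) (Some s) (\<mu> i)"
    and ij: "(i, j) \<in> smo_order I r (pr s)"
    by blast
  have wo: "weak_order I (pr s)"
    using prio s by blast
  have "(i, j) \<notin> pr s"
    using stable s j i i_out envy unfolding stable_def by blast
  then have "r i < r j"
    using smo_order_tiebreak[OF wo \<open>finite I\<close> \<open>inj_on r I\<close> ij] by blast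
  moreover have "(j, i) \<in> improvement_graph I S P pr \<mu>"
    using smo_order_not_reversed[OF wo \<open>finite I\<close> ij] s j i i_out envy
    unfolding improvement_graph_def assigned_def weak_pref_def by auto
  ultimately show False
    using ranked by fastforce
qed (use stable in \<open>auto simp: stable_def\<close>)

theorem corollary4:
  fixes I :: "'i set" and S :: "'s set"
    and P :: "'i \<Rightarrow> 's option rel" and q :: "'s \<Rightarrow> nat" and pr :: "'s \<Rightarrow> 'i rel"
  assumes "finite I" and "card I \<ge> 3" and "finite S"
    and "\<forall>i\<in>I. total_order (outcomes S) (P i)"
    and "\<forall>s\<in>S. q s > 0"
    and "\<forall>s\<in>S. weak_order I (pr s)"
  shows "SOSM I S P q pr \<subseteq> (\<Union>pr'\<in>single_tb_extensions I S pr. SOSM I S P q pr')"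
proof
  fix \<mu> assume \<mu>: "\<mu> \<in> SOSM I S P q pr"
  let ?G = "improvement_graph I S P pr \<mu>"
  have pref: "\<forall>i\<in>I. weak_order (outcomes S) (P i)"
    using assms(4) by (simp add: total_order_def)
  have "finite ?G"
    by (rule finite_subset[OF improvement_graph_subset]) (simp add: assms(1))
  then obtain r where r: "bij_betw r I {1..card I}" and ranked: "\<forall>j\<in>I. \<forall>i\<in>I. (j, i) \<in> ?G \<longrightarrow> r j < r i"
    using acyclic_ranking[OF \<open>finite ?G\<close> SOSM_improvement_graph_acyclic[OF pref assms(6) \<mu>] assms(1)]
    by blast
  let ?pr' = "\<lambda>s. smo_order I r (pr s)"
  have refines: "\<forall>s\<in>S. pr s \<subseteq> ?pr' s"
    using smo_order_extends[OF _ assms(1)] assms(6) by blast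
  have "?pr' \<in> single_tb_extensions I S pr"
    unfolding single_tb_extensions_def using r by blast
  moreover have "stable I S P q ?pr' \<mu>"
    using stable_smo_order[OF assms(6,1) _ bij_betw_imp_inj_on[OF r]] \<mu> ranked improvement_graph_subset
    unfolding SOSM_def by blast
  moreover have "\<not> (\<exists>\<mu>'. stable I S P q ?pr' \<mu>' \<and> pareto_dominates I P \<mu>' \<mu>)"
    using \<mu> stable_antimono[OF refines] unfolding SOSM_def by blast
  ultimately show "\<mu> \<in> (\<Union>pr'\<in>single_tb_extensions I S pr. SOSM I S P q pr')"
    unfolding SOSM_def by blast
qed

end
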